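(* If $xy\in E(C)$ and $P$ is an external $x,y$-path, then $P$ has an even number of edges.
   Context: All graphs are simple. $\mathcal{G}^*$ denotes the class of graphs in which any two distinct odd cycles share at most one edge. Standing setting: $G\in\mathcal{G}^*$ is $2$-connected, and $C$ is a longest odd cycle of $G$ with $|C|\ge 5$. We also write $C$ for its vertex set. For $x,y\in C$, an external $x,y$-path is an $x,y$-path meeting $C$ only at its endpoints. *)

theory Defs
  imports Main
begin

definition graph :: "'a set \<Rightarrow> 'a set set \<Rightarrow> bool" where
  "graph V E \<longleftrightarrow> finite V \<and> (\<forall>e\<in>E. \<exists>u v. e = {u, v} \<and> u \<noteq> v \<and> u \<in> V \<and> v \<in> V)"

definition path_in :: "'a set \<Rightarrow> 'a set set \<Rightarrow> 'a list \<Rightarrow> bool" where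
  "path_in V E p \<longleftrightarrow> p \<noteq> [] \<and> distinct p \<and> set p \<subseteq> V \<and>
     (\<forall>i. Suc i < length p \<longrightarrow> {p ! i, p ! Suc i} \<in> E)"

definition path_edges :: "'a list \<Rightarrow> 'a set set" where
  "path_edges p = {{p ! i, p ! Suc i} | i. Suc i < length p}"

text \<open>A cycle is a list of at least 3 distinct vertices, cyclically consecutive ones adjacent;
  its length (number of vertices = number of edges) is the length of the list.\<close>
definition cycle_in :: "'a set \<Rightarrow> 'a set set \<Rightarrow> 'a list \<Rightarrow> bool" where
  "cycle_in V E c \<longleftrightarrow> 3 \<le> length c \<and> distinct c \<and> set c \<subseteq> V \<and>
     (\<forall>i < length c. {c ! i, c ! (Suc i mod length c)} \<in> E)"

definition cycle_edges :: "'a list \<Rightarrow> 'a set set" where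
  "cycle_edges c = {{c ! i, c ! (Suc i mod length c)} | i. i < length c}"

definition odd_cycle :: "'a set \<Rightarrow> 'a set set \<Rightarrow> 'a list \<Rightarrow> bool" where
  "odd_cycle V E c \<longleftrightarrow> cycle_in V E c \<and> odd (length c)"

text \<open>The class G*: any two distinct odd cycles (as subgraphs, i.e. distinct edge sets)
  share at most one edge.\<close>
definition G_star :: "'a set \<Rightarrow> 'a set set \<Rightarrow> bool" where
  "G_star V E \<longleftrightarrow> (\<forall>c d. odd_cycle V E c \<and> odd_cycle V E d \<and> cycle_edges c \<noteq> cycle_edges d
      \<longrightarrow> card (cycle_edges c \<inter> cycle_edges d) \<le> 1)"

definition connected_graph :: "'a set \<Rightarrow> 'a set set \<Rightarrow> bool" where
  "connected_graph V E \<longleftrightarrow> (\<forall>u\<in>V. \<forall>v\<in>V. \<exists>p. path_in V E p \<and> hd p = u \<and> last p = v)"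

definition two_connected :: "'a set \<Rightarrow> 'a set set \<Rightarrow> bool" where
  "two_connected V E \<longleftrightarrow> 3 \<le> card V \<and> connected_graph V E \<and>
     (\<forall>x\<in>V. connected_graph (V - {x}) {e \<in> E. x \<notin> e})"

end

theory Submission
  imports Defs
begin

text \<open>Rotate the cycle \<open>C\<close> so that the edge \<open>xy\<close> joins its last vertex to its first one; the
  resulting \<open>y,x\<close>-path along \<open>C\<close> together with the interior of \<open>P\<close> forms a cycle \<open>D\<close> of length
  \<open>|C| + |P| - 2\<close>. If \<open>P\<close> had an odd number of edges, \<open>D\<close> would be an odd cycle different from
  \<open>C\<close> sharing all \<open>|C| - 1 \<ge> 2\<close> edges of \<open>C\<close> other than \<open>xy\<close>, which is impossible in G*.\<close>

lemma distinct_hd_neq_last: "distinct xs \<Longrightarrow> 2 \<le> length xs \<Longrightarrow> hd xs \<noteq> last xs"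
  by (cases xs) (auto dest: last_in_set)

lemma list_eq_hd_butlast_tl_last:
  assumes "xs \<noteq> []" "hd xs \<noteq> last xs"
  shows "xs = hd xs # butlast (tl xs) @ [last xs]"
  using assms by (cases xs) auto

lemma path_edges_conv_zip: "path_edges p = (\<lambda>(a, b). {a, b}) ` set (zip p (tl p))"
  unfolding path_edges_def
proof (intro equalityI subsetI)
  fix e assume "e \<in> {{p ! i, p ! Suc i} |i. Suc i < length p}"
  then obtain i where "Suc i < length p" "e = {p ! i, p ! Suc i}" by blast
  then show "e \<in> (\<lambda>(a, b). {a, b}) ` set (zip p (tl p))"
    by (auto simp: set_zip nth_tl intro!: image_eqI[where x="(p ! i, tl p ! i)"])
next
  fix e assume "e \<in> (\<lambda>(a, b). {a, b}) ` set (zip p (tl p))"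
  then show "e \<in> {{p ! i, p ! Suc i} |i. Suc i < length p}"
    by (auto simp: set_zip nth_tl)
qed

lemma path_edges_Nil [simp]: "path_edges [] = {}"
  and path_edges_singleton [simp]: "path_edges [a] = {}"
  and path_edges_Cons_Cons [simp]: "path_edges (a # b # xs) = insert {a, b} (path_edges (b # xs))"
  by (simp_all add: path_edges_conv_zip)

lemma finite_path_edges [simp]: "finite (path_edges p)"
  by (simp add: path_edges_conv_zip)

lemma path_edges_Cons: "p \<noteq> [] \<Longrightarrow> path_edges (a # p) = insert {a, hd p} (path_edges p)"
  by (cases p) auto

lemma path_edges_append:
  "xs \<noteq> [] \<Longrightarrow> path_edges (xs @ ys) = path_edges xs \<union> path_edges (last xs # ys)"
  by (induction xs rule: induct_list012) auto

lemma path_edges_snoc: "xs \<noteq> [] \<Longrightarrow> path_edges (xs @ [b]) = insert {last xs, b} (path_edges xs)"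
  by (simp add: path_edges_append)

lemma path_edges_rev [simp]: "path_edges (rev p) = path_edges p"
proof (induction p)
  case (Cons a p)
  then show ?case
    by (cases "p = []") (auto simp: path_edges_snoc path_edges_Cons last_rev insert_commute)
qed simp

lemma path_in_iff_path_edges:
  "path_in V E p \<longleftrightarrow> p \<noteq> [] \<and> distinct p \<and> set p \<subseteq> V \<and> path_edges p \<subseteq> E"
  by (auto simp: path_in_def path_edges_def)

lemma path_in_rev: "path_in V E p \<Longrightarrow> path_in V E (rev p)"
  by (simp add: path_in_iff_path_edges)

lemma cycle_edges_conv_path_edges:
  assumes "c \<noteq> []" shows "cycle_edges c = path_edges (c @ [hd c])"
proof -
  have "{(c @ [hd c]) ! i, (c @ [hd c]) ! Suc i} = {c ! i, c ! (Suc i mod length c)}"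
    if "i < length c" for i
    using that assms by (cases "Suc i = length c") (auto simp: nth_append hd_conv_nth)
  then have "{{(c @ [hd c]) ! i, (c @ [hd c]) ! Suc i} | i. i < length c} = cycle_edges c"
    unfolding cycle_edges_def by blast
  then show ?thesis
    by (simp add: path_edges_def)
qed

lemma cycle_in_iff_cycle_edges:
  "cycle_in V E c \<longleftrightarrow> 3 \<le> length c \<and> distinct c \<and> set c \<subseteq> V \<and> cycle_edges c \<subseteq> E"
  by (auto simp: cycle_in_def cycle_edges_def)

lemma cycle_edges_rotate1 [simp]: "cycle_edges (rotate1 c) = cycle_edges c"
proof (cases c)
  case (Cons a t)
  show ?thesis
  proof (cases "t = []")
    case False
    have "cycle_edges (rotate1 c) = path_edges ((t @ [a]) @ [hd t])"
      using Cons False cycle_edges_conv_path_edges[of "t @ [a]"] by simp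
    also have "\<dots> = insert {a, hd t} (path_edges (t @ [a]))"
      using path_edges_snoc[of "t @ [a]" "hd t"] by simp
    also have "\<dots> = cycle_edges c"
      using Cons False by (simp add: cycle_edges_conv_path_edges path_edges_Cons)
    finally show ?thesis .
  qed (simp add: Cons)
qed simp

lemma cycle_edges_rotate [simp]: "cycle_edges (rotate n c) = cycle_edges c"
  by (induction n) auto

lemma cycle_edges_append:
  assumes "Q \<noteq> []"
  shows "cycle_edges (Q @ M) = path_edges Q \<union> path_edges (last Q # M @ [hd Q])"
  using assms by (simp add: cycle_edges_conv_path_edges path_edges_append)

lemma finite_cycle_edges [simp]: "finite (cycle_edges c)"
  by (simp add: cycle_edges_def)

lemma card_path_edges_ge_2:
  assumes "distinct Q" "3 \<le> length Q"
  shows "2 \<le> card (path_edges Q)"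
proof -
  obtain a b c r where Q: "Q = a # b # c # r"
    using assms(2) by (metis Suc_le_length_iff numeral_3_eq_3)
  then have "{a, b} \<noteq> {b, c}"
    using assms(1) by (auto simp: doubleton_eq_iff)
  then have "card {{a, b}, {b, c}} = 2" by simp
  moreover have "{{a, b}, {b, c}} \<subseteq> path_edges Q" using Q by simp
  ultimately show ?thesis by (metis card_mono finite_path_edges)
qed

lemma cycle_in_append_path:
  assumes "path_in V E Q" "path_in V E (last Q # M @ [hd Q])"
    and "set M \<inter> set Q = {}" "3 \<le> length Q + length M"
  shows "cycle_in V E (Q @ M)"
  using assms by (auto simp: cycle_in_iff_cycle_edges path_in_iff_path_edges cycle_edges_append)

lemma cycle_edge_as_closing_edge:
  assumes "cycle_in V E C" "{x, y} \<in> cycle_edges C"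
  obtains Q where "path_in V E Q" "set Q = set C" "length Q = length C"
    "path_edges Q \<subseteq> cycle_edges C" "{x, y} = {last Q, hd Q}"
proof -
  obtain i where i: "i < length C" "{x, y} = {C ! i, C ! (Suc i mod length C)}"
    using assms(2) by (auto simp: cycle_edges_def)
  define Q where "Q = rotate (Suc i) C"
  have "Q \<noteq> []" using i(1) by (auto simp: Q_def)
  have "path_edges Q \<subseteq> cycle_edges Q"
    using \<open>Q \<noteq> []\<close> by (auto simp: cycle_edges_conv_path_edges path_edges_append)
  then have QC: "path_edges Q \<subseteq> cycle_edges C" by (simp add: Q_def)
  then have "path_in V E Q"
    using assms(1) \<open>Q \<noteq> []\<close> by (auto simp: Q_def path_in_iff_path_edges cycle_in_iff_cycle_edges)
  moreover have "hd Q = C ! (Suc i mod length C)"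
    unfolding Q_def using i(1) by (intro hd_rotate_conv_nth) auto
  moreover have "last Q = C ! i"
  proof -
    have "last Q = Q ! (length C - 1)"
      using \<open>Q \<noteq> []\<close> by (simp add: Q_def last_conv_nth)
    also have "\<dots> = C ! ((Suc i + (length C - 1)) mod length C)"
      unfolding Q_def using i(1) by (intro nth_rotate) auto
    also have "Suc i + (length C - 1) = i + length C"
      using i(1) by simp
    finally show ?thesis using i(1) by simp
  qed
  ultimately show ?thesis
    using that QC i(2) by (simp add: Q_def)
qed

lemma odd_ear_of_odd_cycle:
  assumes "G_star V E" "odd_cycle V E C"
    and "path_in V E Q" "set Q = set C" "length Q = length C" "path_edges Q \<subseteq> cycle_edges C"
    and "path_in V E (last Q # M @ [hd Q])" "set M \<inter> set C = {}"
    and "path_edges (last Q # M @ [hd Q]) \<inter> cycle_edges C = {}"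
  shows "odd (length M)"
proof (rule ccontr)
  assume "\<not> odd (length M)"
  define D where "D = Q @ M"
  have C: "3 \<le> length C" "odd (length C)"
    using assms(2) by (auto simp: odd_cycle_def cycle_in_def)
  have "Q \<noteq> []" using assms(3) by (simp add: path_in_def)
  have D_edges: "cycle_edges D = path_edges Q \<union> path_edges (last Q # M @ [hd Q])"
    using \<open>Q \<noteq> []\<close> by (simp add: D_def cycle_edges_append)
  have "cycle_in V E D"
    unfolding D_def using assms(3,7) by (rule cycle_in_append_path) (use assms(4,5,8) C in auto)
  then have "odd_cycle V E D"
    using assms(5) C(2) \<open>\<not> odd (length M)\<close> by (simp add: odd_cycle_def D_def)
  moreover have "cycle_edges C \<noteq> cycle_edges D"
  proof -
    have "{last Q, hd (M @ [hd Q])} \<in> path_edges (last Q # M @ [hd Q])"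
      by (simp add: path_edges_Cons)
    then show ?thesis using assms(9) D_edges by auto
  qed
  moreover have "2 \<le> card (cycle_edges C \<inter> cycle_edges D)"
  proof -
    have "2 \<le> card (path_edges Q)"
      using assms(3,5) C(1) by (intro card_path_edges_ge_2) (auto simp: path_in_def)
    moreover have "path_edges Q \<subseteq> cycle_edges C \<inter> cycle_edges D"
      using assms(6) D_edges by auto
    ultimately show ?thesis
      by (meson card_mono finite_Int finite_cycle_edges order_trans)
  qed
  ultimately show False
    using assms(1,2) unfolding G_star_def by fastforce
qed

theorem mainTheorem6:
  fixes V :: "'a set" and E :: "'a set set" and C P :: "'a list" and x y :: 'a
  assumes "graph V E"
    and "G_star V E"
    and "two_connected V E"
    and "odd_cycle V E C"
    and "\<forall>D. odd_cycle V E D \<longrightarrow> length D \<le> length C"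
    and "5 \<le> length C"
    and "{x, y} \<in> cycle_edges C"
    and "path_in V E P" and "hd P = x" and "last P = y"
    and "set P \<inter> set C = {x, y}"
    and "path_edges P \<inter> cycle_edges C = {}"
  shows "even (length P - 1)"
proof -
  have "cycle_in V E C" using assms(4) by (simp add: odd_cycle_def)
  then obtain Q where Q: "path_in V E Q" "set Q = set C" "length Q = length C"
      "path_edges Q \<subseteq> cycle_edges C" and xy: "{x, y} = {last Q, hd Q}"
    using assms(7) by (rule cycle_edge_as_closing_edge)
  have "hd Q \<noteq> last Q"
    using Q(1,3) \<open>cycle_in V E C\<close> by (intro distinct_hd_neq_last) (auto simp: path_in_def cycle_in_def)
  then have "x \<noteq> y" using xy by (auto simp: doubleton_eq_iff)
  define M where "M = butlast (tl P)"
  have P: "P = x # M @ [y]"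
    using assms(8-10) \<open>x \<noteq> y\<close> list_eq_hd_butlast_tl_last[of P] by (simp add: M_def path_in_def)
  have "set M \<inter> set C = {}"
    using assms(8,11) P by (auto simp: path_in_def)
  have "odd (length M)"
  proof (cases "x = last Q")
    case True
    then have "y = hd Q" using xy \<open>x \<noteq> y\<close> by (auto simp: doubleton_eq_iff)
    then show ?thesis
      using odd_ear_of_odd_cycle[OF assms(2,4) Q] assms(8,12) \<open>set M \<inter> set C = {}\<close> P True by simp
  next
    case False
    then have "y = last Q" "x = hd Q" using xy by (auto simp: doubleton_eq_iff)
    then have "rev P = last Q # rev M @ [hd Q]" using P by simp
    then show ?thesis
      using odd_ear_of_odd_cycle[OF assms(2,4) Q, of "rev M"] path_in_rev[OF assms(8)] assms(12)
        \<open>set M \<inter> set C = {}\<close> by (metis length_rev path_edges_rev set_rev)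
  qed
  then show ?thesis using P by simp
qed

end
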